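(* (Uncertainty Principle.) Let $G$ be a locally compact abelian group with dual group $\Gamma$, let $(\mu,\nu)$ be a spectral pair of positive Borel measures on $(G,\Gamma)$ with associated unitary $F\colon\mathcal{L}^2(\mu)\to\mathcal{L}^2(\nu)$, and let $f\in\mathcal{L}^2(\mu)$ with $\|f\|_\mu>0$. Let $\varepsilon,\delta\ge0$. If $A\subset G$ and $B\subset\Gamma$ are measurable sets such that $\|f-\chi_Af\|_\mu\le\varepsilon\|f\|_\mu$ and $\|Ff-\chi_BFf\|_\nu\le\delta\|Ff\|_\nu$, then $(1-\varepsilon-\delta)^2\le\mu(A)\nu(B)$.
   Context: $G$ is written additively; $\Gamma=\hat G$ is the group of continuous homomorphisms $G\to\mathbb{T}$ (unit circle in $\mathbb{C}$), with $G$ identified with the dual of $\Gamma$. Write $\langle x,\xi\rangle$ for the pairing, $e_\xi(x)=e_x(\xi)=\langle x,\xi\rangle$. $(\mu,\nu)$ is a spectral pair if, with $(Ff)(\xi)=\int_G f(x)\overline{e_\xi(x)}\,d\mu(x)$ for $f\in\mathcal{L}^1\cap\mathcal{L}^2(\mu)$, the set $\{Ff\}$ is dense in $\mathcal{L}^2(\nu)$ and $\int_\Gamma|Ff|^2d\nu=\int_G|f|^2d\mu$ for all such $f$; $F$ then extends by continuity to an isometric isomorphism of $\mathcal{L}^2(\mu)$ onto $\mathcal{L}^2(\nu)$. $\chi_A$ denotes the indicator function of $A$. *)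

theory Defs
  imports "HOL-Analysis.Analysis"
begin

definition lca_group :: "'g::{t2_space,ab_group_add} itself \<Rightarrow> bool" where
  "lca_group _ \<longleftrightarrow>
     continuous_on UNIV (\<lambda>p::'g \<times> 'g. fst p + snd p) \<and>
     continuous_on UNIV (uminus :: 'g \<Rightarrow> 'g) \<and>
     locally_compact_space (euclidean :: 'g topology)"

text \<open>The dual group: continuous homomorphisms into the unit circle; pairing is application.\<close>
definition chars :: "('g::{topological_space,ab_group_add} \<Rightarrow> complex) set" where
  "chars = {ch. continuous_on UNIV ch \<and> (\<forall>x y. ch (x + y) = ch x * ch y) \<and> (\<forall>x. cmod (ch x) = 1)}"

text \<open>Topology of the dual group: uniform convergence on compact sets (compact-open topology).\<close>
definition dual_topology :: "('g::{topological_space,ab_group_add} \<Rightarrow> complex) topology" where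
  "dual_topology = topology_generated_by
     {{ch \<in> chars. \<forall>x\<in>K. cmod (ch x - ch0 x) < r} | ch0 K r. ch0 \<in> chars \<and> compact K \<and> r > 0}"

definition dual_borel_measure :: "('g::{topological_space,ab_group_add} \<Rightarrow> complex) measure \<Rightarrow> bool" where
  "dual_borel_measure \<nu> \<longleftrightarrow> space \<nu> = chars \<and> sets \<nu> = sigma_sets chars {U. openin dual_topology U}"

definition L2 :: "'a measure \<Rightarrow> ('a \<Rightarrow> complex) \<Rightarrow> bool" where
  "L2 M f \<longleftrightarrow> f \<in> borel_measurable M \<and> integrable M (\<lambda>x. (cmod (f x))\<^sup>2)"

definition L2norm :: "'a measure \<Rightarrow> ('a \<Rightarrow> complex) \<Rightarrow> real" where
  "L2norm M f = sqrt (LINT x|M. (cmod (f x))\<^sup>2)"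

definition fourier :: "'g measure \<Rightarrow> ('g \<Rightarrow> complex) \<Rightarrow> (('g \<Rightarrow> complex) \<Rightarrow> complex)" where
  "fourier \<mu> f = (\<lambda>\<xi>. LINT x|\<mu>. f x * cnj (\<xi> x))"

definition spectral_pair :: "'g measure \<Rightarrow> ('g \<Rightarrow> complex) measure \<Rightarrow> bool" where
  "spectral_pair \<mu> \<nu> \<longleftrightarrow>
     (\<forall>f. integrable \<mu> f \<and> L2 \<mu> f \<longrightarrow>
          L2 \<nu> (fourier \<mu> f) \<and> L2norm \<nu> (fourier \<mu> f) = L2norm \<mu> f) \<and>
     (\<forall>g. L2 \<nu> g \<longrightarrow> (\<forall>e>0. \<exists>f. integrable \<mu> f \<and> L2 \<mu> f \<and>
          L2norm \<nu> (\<lambda>\<xi>. fourier \<mu> f \<xi> - g \<xi>) < e))"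

text \<open>g represents F f, where F is the extension by continuity of the Fourier transform
  from L1 \<inter> L2 to L2.\<close>
definition fourier_ext :: "'g measure \<Rightarrow> ('g \<Rightarrow> complex) measure \<Rightarrow> ('g \<Rightarrow> complex)
     \<Rightarrow> (('g \<Rightarrow> complex) \<Rightarrow> complex) \<Rightarrow> bool" where
  "fourier_ext \<mu> \<nu> f g \<longleftrightarrow> L2 \<nu> g \<and>
     (\<exists>fs. (\<forall>n. integrable \<mu> (fs n) \<and> L2 \<mu> (fs n)) \<and>
        (\<lambda>n. L2norm \<mu> (\<lambda>x. fs n x - f x)) \<longlonglongrightarrow> 0 \<and>
        (\<lambda>n. L2norm \<nu> (\<lambda>\<xi>. fourier \<mu> (fs n) \<xi> - g \<xi>)) \<longlonglongrightarrow> 0)"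

end

theory Submission
  imports Defs
begin

(* Put h = indicator A * f. Since \<mu> A < \<infinity>, Cauchy-Schwarz gives h \<in> L1 with
   |F h| \<le> \<parallel>h\<parallel>\<^sub>1 \<le> sqrt (\<mu> A) \<parallel>f\<parallel> pointwise on the characters, hence
   \<parallel>indicator B * F h\<parallel> \<le> sqrt (\<mu> A \<nu> B) \<parallel>f\<parallel>. Since F is isometric on L1 \<inter> L2 and F f is
   an L2-limit of such transforms, \<parallel>F f\<parallel> = \<parallel>f\<parallel> and \<parallel>F f - F h\<parallel> = \<parallel>f - h\<parallel> \<le> \<epsilon> \<parallel>f\<parallel>. So
     \<parallel>f\<parallel> = \<parallel>F f\<parallel> \<le> \<parallel>F f - indicator B * F f\<parallel> + \<parallel>F f - F h\<parallel> + \<parallel>indicator B * F h\<parallel>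
         \<le> (\<delta> + \<epsilon> + sqrt (\<mu> A \<nu> B)) \<parallel>f\<parallel>.
   If \<mu> A or \<nu> B is infinite the claim is trivial, because a null A (or B) would force
   \<epsilon> \<ge> 1 (or \<delta> \<ge> 1). *)

lemma power2_cmod_add_le:
  "(cmod (a + b))\<^sup>2 \<le> (cmod a)\<^sup>2 + 2 * (cmod a * cmod b) + (cmod b)\<^sup>2"
  using power_mono[OF norm_triangle_ineq[of a b] norm_ge_zero, of 2] by (simp add: power2_sum)

lemma L2_add:
  assumes "L2 M f" "L2 M g"
  shows "L2 M (\<lambda>x. f x + g x)"
proof -
  have [measurable]: "f \<in> borel_measurable M" "g \<in> borel_measurable M"
    using assms by (simp_all add: L2_def)
  have bound: "(cmod (a + b))\<^sup>2 \<le> 2 * (cmod a)\<^sup>2 + 2 * (cmod b)\<^sup>2" for a b :: complex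
    using power2_cmod_add_le[of a b] sum_squares_bound[of "cmod a" "cmod b"] by linarith
  have "integrable M (\<lambda>x. (cmod (f x + g x))\<^sup>2)"
  proof (rule Bochner_Integration.integrable_bound)
    show "integrable M (\<lambda>x. 2 * (cmod (f x))\<^sup>2 + 2 * (cmod (g x))\<^sup>2)"
      using assms by (simp add: L2_def)
    show "AE x in M. norm ((cmod (f x + g x))\<^sup>2) \<le> norm (2 * (cmod (f x))\<^sup>2 + 2 * (cmod (g x))\<^sup>2)"
      using bound by (auto intro!: AE_I2 simp del: norm_mult)
  qed measurable
  then show ?thesis
    by (simp add: L2_def)
qed

lemma L2_diff:
  assumes "L2 M f" "L2 M g"
  shows "L2 M (\<lambda>x. f x - g x)"
proof -
  have "L2 M (\<lambda>x. - g x)"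
    using assms(2) by (simp add: L2_def)
  from L2_add[OF assms(1) this] show ?thesis
    by simp
qed

lemma L2_indicator_mult:
  assumes "L2 M f" "A \<in> sets M"
  shows "L2 M (\<lambda>x. indicator A x * f x)"
  using assms unfolding L2_def
  by (auto intro!: Bochner_Integration.integrable_bound[where f = "\<lambda>x. (cmod (f x))\<^sup>2"]
      simp: indicator_def)

lemma
  assumes "A \<in> sets M" "emeasure M A < \<infinity>"
  shows L2_indicator: "L2 M (indicator A :: _ \<Rightarrow> complex)"
    and L2norm_indicator: "L2norm M (indicator A :: _ \<Rightarrow> complex) = sqrt (measure M A)"
proof -
  have "(\<lambda>x. (cmod (indicator A x :: complex))\<^sup>2) = indicator A"
    by (auto simp: indicator_def)
  then show "L2 M (indicator A :: _ \<Rightarrow> complex)" "L2norm M (indicator A :: _ \<Rightarrow> complex) = sqrt (measure M A)"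
    using assms by (simp_all add: L2_def L2norm_def)
qed

lemma L2norm_nonneg: "0 \<le> L2norm M f"
  by (simp add: L2norm_def integral_nonneg_AE)

lemma L2norm_cong: "(\<And>x. x \<in> space M \<Longrightarrow> f x = g x) \<Longrightarrow> L2norm M f = L2norm M g"
  unfolding L2norm_def by (metis (mono_tags, lifting) Bochner_Integration.integral_cong)

lemma L2norm_minus_commute: "L2norm M (\<lambda>x. f x - g x) = L2norm M (\<lambda>x. g x - f x)"
  by (simp add: L2norm_def norm_minus_commute)

lemma L2_Cauchy_Schwarz:
  assumes "L2 M f" "L2 M g"
  shows "integrable M (\<lambda>x. cmod (f x) * cmod (g x))"
    and "(LINT x|M. cmod (f x) * cmod (g x)) \<le> L2norm M f * L2norm M g"
proof -
  have [measurable]: "f \<in> borel_measurable M" "g \<in> borel_measurable M"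
    and int_f: "integrable M (\<lambda>x. (cmod (f x))\<^sup>2)" and int_g: "integrable M (\<lambda>x. (cmod (g x))\<^sup>2)"
    using assms by (simp_all add: L2_def)
  show int_fg: "integrable M (\<lambda>x. cmod (f x) * cmod (g x))"
  proof (rule Bochner_Integration.integrable_bound)
    show "integrable M (\<lambda>x. (cmod (f x))\<^sup>2 + (cmod (g x))\<^sup>2)"
      using int_f int_g by simp
    show "AE x in M. norm (cmod (f x) * cmod (g x)) \<le> norm ((cmod (f x))\<^sup>2 + (cmod (g x))\<^sup>2)"
    proof (rule AE_I2)
      fix x
      have "cmod (f x) * cmod (g x) \<le> (cmod (f x))\<^sup>2 + (cmod (g x))\<^sup>2"
        using sum_squares_bound[of "cmod (f x)" "cmod (g x)"]
          mult_nonneg_nonneg[OF norm_ge_zero norm_ge_zero, of "f x" "g x"]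
        by linarith
      then show "norm (cmod (f x) * cmod (g x)) \<le> norm ((cmod (f x))\<^sup>2 + (cmod (g x))\<^sup>2)"
        by simp
    qed
  qed measurable
  have nn_integral_eq: "(\<integral>\<^sup>+x. ennreal (h x) \<partial>M) = ennreal (LINT x|M. h x)"
    if "integrable M h" "\<And>x. 0 \<le> h x" for h :: "_ \<Rightarrow> real"
    using that by (intro nn_integral_eq_integral) auto
  have "ennreal ((LINT x|M. cmod (f x) * cmod (g x))\<^sup>2)
      = (\<integral>\<^sup>+x. ennreal (cmod (f x) * cmod (g x)) \<partial>M)\<^sup>2"
    by (simp add: nn_integral_eq[OF int_fg] ennreal_power integral_nonneg_AE)
  also have "\<dots> \<le> (\<integral>\<^sup>+x. ennreal (cmod (f x)) ^ 2 \<partial>M) *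
      (\<integral>\<^sup>+x. ennreal (cmod (g x)) ^ 2 \<partial>M)"
    unfolding ennreal_mult[OF norm_ge_zero norm_ge_zero]
    by (rule Cauchy_Schwarz_nn_integral) measurable
  also have "\<dots> = ennreal ((LINT x|M. (cmod (f x))\<^sup>2) * (LINT x|M. (cmod (g x))\<^sup>2))"
    by (simp add: ennreal_power nn_integral_eq int_f int_g ennreal_mult integral_nonneg_AE)
  finally have "(LINT x|M. cmod (f x) * cmod (g x))\<^sup>2
      \<le> (LINT x|M. (cmod (f x))\<^sup>2) * (LINT x|M. (cmod (g x))\<^sup>2)"
    by (simp add: integral_nonneg_AE)
  then show "(LINT x|M. cmod (f x) * cmod (g x)) \<le> L2norm M f * L2norm M g"
    by (simp add: L2norm_def real_le_rsqrt flip: real_sqrt_mult)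
qed

lemma L2norm_triangle:
  assumes "L2 M f" "L2 M g"
  shows "L2norm M (\<lambda>x. f x + g x) \<le> L2norm M f + L2norm M g"
proof -
  have int_f: "integrable M (\<lambda>x. (cmod (f x))\<^sup>2)" and int_g: "integrable M (\<lambda>x. (cmod (g x))\<^sup>2)"
    and int_sum: "integrable M (\<lambda>x. (cmod (f x + g x))\<^sup>2)"
    using assms L2_add[OF assms] by (auto simp: L2_def)
  note CS = L2_Cauchy_Schwarz[OF assms]
  have "(LINT x|M. (cmod (f x + g x))\<^sup>2)
      \<le> (LINT x|M. (cmod (f x))\<^sup>2 + 2 * (cmod (f x) * cmod (g x)) + (cmod (g x))\<^sup>2)"
    using int_sum int_f int_g CS(1) by (intro integral_mono) (auto simp: power2_cmod_add_le)
  also have "\<dots> = (L2norm M f)\<^sup>2 + 2 * (LINT x|M. cmod (f x) * cmod (g x)) + (L2norm M g)\<^sup>2"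
    using int_f int_g CS(1) by (simp add: L2norm_def integral_nonneg_AE)
  also have "\<dots> \<le> (L2norm M f + L2norm M g)\<^sup>2"
    using CS(2) by (simp add: power2_sum)
  finally show ?thesis
    unfolding L2norm_def[of M "\<lambda>x. f x + g x"]
    using L2norm_nonneg[of M f] L2norm_nonneg[of M g] by (intro real_le_lsqrt) simp_all
qed

lemma L2norm_diff_triangle:
  assumes "L2 M f" "L2 M g" "L2 M h"
  shows "L2norm M (\<lambda>x. f x - h x) \<le> L2norm M (\<lambda>x. f x - g x) + L2norm M (\<lambda>x. g x - h x)"
  using L2norm_triangle[OF L2_diff[OF assms(1,2)] L2_diff[OF assms(2,3)]] by simp

lemma L2norm_le_diff_add:
  assumes "L2 M f" "L2 M g"
  shows "L2norm M f \<le> L2norm M (\<lambda>x. f x - g x) + L2norm M g"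
  using L2norm_triangle[OF L2_diff[OF assms] assms(2)] by simp

lemma L2norm_indicator_mult_le:
  assumes "L2 M f" "A \<in> sets M"
  shows "L2norm M (\<lambda>x. indicator A x * f x) \<le> L2norm M f"
  using assms L2_indicator_mult[OF assms] unfolding L2norm_def L2_def
  by (auto intro!: integral_mono simp: indicator_def)

lemma L2norm_indicator_mult_le_bound:
  assumes "L2 M f" "A \<in> sets M" "emeasure M A < \<infinity>"
    and "0 \<le> c" "\<And>x. x \<in> A \<Longrightarrow> cmod (f x) \<le> c"
  shows "L2norm M (\<lambda>x. indicator A x * f x) \<le> sqrt (measure M A) * c"
proof -
  have "(LINT x|M. (cmod (indicator A x * f x))\<^sup>2) \<le> (LINT x|M. c\<^sup>2 * indicator A x)"
  proof (rule integral_mono)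
    show "integrable M (\<lambda>x. (cmod (indicator A x * f x))\<^sup>2)"
      using L2_indicator_mult[OF assms(1,2)] by (simp add: L2_def)
    show "integrable M (\<lambda>x. c\<^sup>2 * indicator A x)"
      using assms(2,3) by simp
    show "(cmod (indicator A x * f x))\<^sup>2 \<le> c\<^sup>2 * indicator A x" for x
      using assms(4,5) by (auto simp: indicator_def power_mono)
  qed
  also have "\<dots> = measure M A * c\<^sup>2"
    using assms(2) by simp
  finally have "L2norm M (\<lambda>x. indicator A x * f x) \<le> sqrt (measure M A * c\<^sup>2)"
    unfolding L2norm_def by (rule real_sqrt_le_mono)
  then show ?thesis
    using assms(4) by (simp add: real_sqrt_mult)
qed

lemma L2norm_diff_indicator_null:
  assumes "L2 M f" "A \<in> null_sets M"
  shows "L2norm M (\<lambda>x. f x - indicator A x * f x) = L2norm M f"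
  unfolding L2norm_def
proof (intro arg_cong[where f = sqrt] integral_cong_AE)
  show "(\<lambda>x. (cmod (f x - indicator A x * f x))\<^sup>2) \<in> borel_measurable M"
    "(\<lambda>x. (cmod (f x))\<^sup>2) \<in> borel_measurable M"
    using assms by (auto simp: L2_def)
  show "AE x in M. (cmod (f x - indicator A x * f x))\<^sup>2 = (cmod (f x))\<^sup>2"
    using AE_not_in[OF assms(2)] by eventually_elim simp
qed

lemma integrable_indicator_mult_L2:
  assumes "L2 M f" "A \<in> sets M" "emeasure M A < \<infinity>"
  shows "integrable M (\<lambda>x. indicator A x * f x)"
  using L2_Cauchy_Schwarz(1)[OF L2_indicator[OF assms(2,3)] assms(1)] assms
  by (subst integrable_norm_iff[symmetric]) (auto simp: L2_def norm_mult)

lemma cnj_char_borel_measurable: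
  assumes "sets M = sets borel" "\<xi> \<in> chars"
  shows "(\<lambda>x. cnj (\<xi> x)) \<in> borel_measurable M"
proof -
  have "(\<lambda>x. cnj (\<xi> x)) \<in> borel_measurable borel"
    using assms(2) by (intro borel_measurable_continuous_onI continuous_on_cnj) (simp add: chars_def)
  then show ?thesis
    by (simp add: measurable_cong_sets[OF assms(1) refl])
qed

lemma integrable_mult_cnj_char:
  assumes "sets M = sets borel" "\<xi> \<in> chars" "integrable M u"
  shows "integrable M (\<lambda>x. u x * cnj (\<xi> x))"
proof (rule Bochner_Integration.integrable_bound[OF assms(3)])
  show "(\<lambda>x. u x * cnj (\<xi> x)) \<in> borel_measurable M"
    using cnj_char_borel_measurable[OF assms(1,2)] assms(3) by measurable
  show "AE x in M. norm (u x * cnj (\<xi> x)) \<le> norm (u x)"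
    using assms(2) by (auto simp: chars_def norm_mult)
qed

lemma fourier_diff:
  assumes "sets M = sets borel" "\<xi> \<in> chars" "integrable M u" "integrable M v"
  shows "fourier M (\<lambda>x. u x - v x) \<xi> = fourier M u \<xi> - fourier M v \<xi>"
  using integrable_mult_cnj_char[OF assms(1,2,3)] integrable_mult_cnj_char[OF assms(1,2,4)]
  by (simp add: fourier_def left_diff_distrib)

lemma norm_fourier_indicator_mult_le:
  assumes "\<xi> \<in> chars" "L2 M f" "A \<in> sets M" "emeasure M A < \<infinity>"
  shows "cmod (fourier M (\<lambda>x. indicator A x * f x) \<xi>) \<le> sqrt (measure M A) * L2norm M f"
proof -
  have "cmod (fourier M (\<lambda>x. indicator A x * f x) \<xi>)
      \<le> (LINT x|M. cmod (indicator A x * f x * cnj (\<xi> x)))"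
    unfolding fourier_def by (rule integral_norm_bound)
  also have "\<dots> = (LINT x|M. cmod (indicator A x :: complex) * cmod (f x))"
    using assms(1) unfolding chars_def
    by (intro Bochner_Integration.integral_cong) (auto simp: norm_mult)
  also have "\<dots> \<le> sqrt (measure M A) * L2norm M f"
    using L2_Cauchy_Schwarz(2)[OF L2_indicator[OF assms(3,4)] assms(2)]
    unfolding L2norm_indicator[OF assms(3,4)] .
  finally show ?thesis .
qed

lemma spectral_pairD:
  assumes "spectral_pair \<mu> \<nu>" "integrable \<mu> u" "L2 \<mu> u"
  shows "L2 \<nu> (fourier \<mu> u)" and "L2norm \<nu> (fourier \<mu> u) = L2norm \<mu> u"
  using assms unfolding spectral_pair_def by blast+

lemma spectral_pair_L2norm_fourier_diff:
  assumes "sets \<mu> = sets borel" "space \<nu> = chars" "spectral_pair \<mu> \<nu>"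
    and "integrable \<mu> u" "L2 \<mu> u" "integrable \<mu> v" "L2 \<mu> v"
  shows "L2norm \<nu> (\<lambda>\<xi>. fourier \<mu> u \<xi> - fourier \<mu> v \<xi>) = L2norm \<mu> (\<lambda>x. u x - v x)"
proof -
  have "L2norm \<nu> (\<lambda>\<xi>. fourier \<mu> u \<xi> - fourier \<mu> v \<xi>)
      = L2norm \<nu> (fourier \<mu> (\<lambda>x. u x - v x))"
    using assms(1,2,4,6) by (intro L2norm_cong) (simp add: fourier_diff)
  also have "\<dots> = L2norm \<mu> (\<lambda>x. u x - v x)"
    using assms(3-7) by (intro spectral_pairD(2) Bochner_Integration.integrable_diff L2_diff)
  finally show ?thesis .
qed

lemma le_of_le_add_null_sequence:
  fixes x y :: real
  assumes "e \<longlonglongrightarrow> 0" "\<And>n. x \<le> y + e n"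
  shows "x \<le> y"
  using LIMSEQ_le_const[OF tendsto_add[OF tendsto_const assms(1)], of x y] assms(2) by auto

lemma fourier_ext_L2norm_diff:
  assumes "sets \<mu> = sets borel" "space \<nu> = chars" "spectral_pair \<mu> \<nu>"
    and "L2 \<mu> f" "fourier_ext \<mu> \<nu> f Ff" "integrable \<mu> h" "L2 \<mu> h"
  shows "L2norm \<nu> (\<lambda>\<xi>. Ff \<xi> - fourier \<mu> h \<xi>) = L2norm \<mu> (\<lambda>x. f x - h x)"
proof -
  obtain fs where L2_Ff: "L2 \<nu> Ff" and fs: "\<And>n. integrable \<mu> (fs n)" "\<And>n. L2 \<mu> (fs n)"
    and lim_\<mu>: "(\<lambda>n. L2norm \<mu> (\<lambda>x. fs n x - f x)) \<longlonglongrightarrow> 0"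
    and lim_\<nu>: "(\<lambda>n. L2norm \<nu> (\<lambda>\<xi>. fourier \<mu> (fs n) \<xi> - Ff \<xi>)) \<longlonglongrightarrow> 0"
    using assms(5) unfolding fourier_ext_def by blast
  define e where
    "e n = L2norm \<nu> (\<lambda>\<xi>. fourier \<mu> (fs n) \<xi> - Ff \<xi>) + L2norm \<mu> (\<lambda>x. fs n x - f x)" for n
  have e: "e \<longlonglongrightarrow> 0"
    unfolding e_def using tendsto_add[OF lim_\<nu> lim_\<mu>] by simp
  have iso: "L2norm \<nu> (\<lambda>\<xi>. fourier \<mu> (fs n) \<xi> - fourier \<mu> h \<xi>)
      = L2norm \<mu> (\<lambda>x. fs n x - h x)" for n
    using assms(1-3,6,7) fs by (intro spectral_pair_L2norm_fourier_diff)
  have L2_F: "L2 \<nu> (fourier \<mu> (fs n))" "L2 \<nu> (fourier \<mu> h)" for n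
    using assms(3,6,7) fs by (auto intro: spectral_pairD(1))
  show ?thesis
  proof (rule antisym; rule le_of_le_add_null_sequence[OF e])
    fix n
    show "L2norm \<nu> (\<lambda>\<xi>. Ff \<xi> - fourier \<mu> h \<xi>) \<le> L2norm \<mu> (\<lambda>x. f x - h x) + e n"
      using L2norm_diff_triangle[OF L2_Ff L2_F(1)[of n] L2_F(2)]
        L2norm_diff_triangle[OF fs(2) assms(4,7), of n] iso[of n] L2norm_minus_commute[of \<nu> Ff "fourier \<mu> (fs n)"]
      unfolding e_def by linarith
    show "L2norm \<mu> (\<lambda>x. f x - h x) \<le> L2norm \<nu> (\<lambda>\<xi>. Ff \<xi> - fourier \<mu> h \<xi>) + e n"
      using L2norm_diff_triangle[OF assms(4) fs(2) assms(7), of n]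
        L2norm_diff_triangle[OF L2_F(1)[of n] L2_Ff L2_F(2)] iso[of n] L2norm_minus_commute[of \<mu> f "fs n"]
      unfolding e_def by linarith
  qed
qed

lemma fourier_ext_L2norm:
  assumes "sets \<mu> = sets borel" "space \<nu> = chars" "spectral_pair \<mu> \<nu>"
    and "L2 \<mu> f" "fourier_ext \<mu> \<nu> f Ff"
  shows "L2norm \<nu> Ff = L2norm \<mu> f"
  using fourier_ext_L2norm_diff[OF assms, of "\<lambda>_. 0"] by (simp add: fourier_def L2_def)

lemma uncertainty_inequality:
  assumes "sets \<mu> = sets borel" "space \<nu> = chars" "spectral_pair \<mu> \<nu>"
    and "L2 \<mu> f" "fourier_ext \<mu> \<nu> f Ff"
    and "A \<in> sets \<mu>" "B \<in> sets \<nu>" "emeasure \<mu> A < \<infinity>" "emeasure \<nu> B < \<infinity>"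
  shows "L2norm \<mu> f \<le> L2norm \<mu> (\<lambda>x. f x - indicator A x * f x)
      + L2norm \<nu> (\<lambda>\<xi>. Ff \<xi> - indicator B \<xi> * Ff \<xi>)
      + sqrt (measure \<mu> A * measure \<nu> B) * L2norm \<mu> f"
proof -
  define h where "h x = indicator A x * f x" for x
  have h: "integrable \<mu> h" "L2 \<mu> h"
    using assms(4,6,8) unfolding h_def
    by (simp_all add: integrable_indicator_mult_L2 L2_indicator_mult)
  have L2_Ff: "L2 \<nu> Ff"
    using assms(5) by (simp add: fourier_ext_def)
  have L2_Fh: "L2 \<nu> (fourier \<mu> h)"
    using assms(3) h by (rule spectral_pairD(1))
  have "L2norm \<nu> Ff
      \<le> L2norm \<nu> (\<lambda>\<xi>. Ff \<xi> - indicator B \<xi> * Ff \<xi>) + L2norm \<nu> (\<lambda>\<xi>. indicator B \<xi> * Ff \<xi>)"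
    by (rule L2norm_le_diff_add[OF L2_Ff L2_indicator_mult[OF L2_Ff assms(7)]])
  moreover have "L2norm \<nu> (\<lambda>\<xi>. indicator B \<xi> * Ff \<xi>)
      \<le> L2norm \<nu> (\<lambda>\<xi>. indicator B \<xi> * (Ff \<xi> - fourier \<mu> h \<xi>))
        + L2norm \<nu> (\<lambda>\<xi>. indicator B \<xi> * fourier \<mu> h \<xi>)"
    using L2norm_le_diff_add[OF L2_indicator_mult[OF L2_Ff assms(7)] L2_indicator_mult[OF L2_Fh assms(7)]]
    by (simp add: right_diff_distrib)
  moreover have "L2norm \<nu> (\<lambda>\<xi>. indicator B \<xi> * (Ff \<xi> - fourier \<mu> h \<xi>))
      \<le> L2norm \<nu> (\<lambda>\<xi>. Ff \<xi> - fourier \<mu> h \<xi>)"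
    by (rule L2norm_indicator_mult_le[OF L2_diff[OF L2_Ff L2_Fh] assms(7)])
  moreover have "L2norm \<nu> (\<lambda>\<xi>. Ff \<xi> - fourier \<mu> h \<xi>) = L2norm \<mu> (\<lambda>x. f x - h x)"
    by (rule fourier_ext_L2norm_diff[OF assms(1-5) h])
  moreover have "L2norm \<nu> (\<lambda>\<xi>. indicator B \<xi> * fourier \<mu> h \<xi>)
      \<le> sqrt (measure \<nu> B) * (sqrt (measure \<mu> A) * L2norm \<mu> f)"
  proof (rule L2norm_indicator_mult_le_bound[OF L2_Fh assms(7,9)])
    show "0 \<le> sqrt (measure \<mu> A) * L2norm \<mu> f"
      by (simp add: L2norm_nonneg)
    show "cmod (fourier \<mu> h \<xi>) \<le> sqrt (measure \<mu> A) * L2norm \<mu> f" if "\<xi> \<in> B" for \<xi>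
      using sets.sets_into_space[OF assms(7)] that assms(2,4,6,8) unfolding h_def
      by (intro norm_fourier_indicator_mult_le) auto
  qed
  ultimately show ?thesis
    using fourier_ext_L2norm[OF assms(1-5)] by (simp add: h_def real_sqrt_mult mult_ac)
qed

lemma uncertainty_principle_finite:
  assumes "sets \<mu> = sets borel" "space \<nu> = chars" "spectral_pair \<mu> \<nu>"
    and "L2 \<mu> f" "0 < L2norm \<mu> f" "fourier_ext \<mu> \<nu> f Ff" "\<epsilon> + \<delta> \<le> 1"
    and "A \<in> sets \<mu>" "B \<in> sets \<nu>" "emeasure \<mu> A < \<infinity>" "emeasure \<nu> B < \<infinity>"
    and "L2norm \<mu> (\<lambda>x. f x - indicator A x * f x) \<le> \<epsilon> * L2norm \<mu> f"
    and "L2norm \<nu> (\<lambda>\<xi>. Ff \<xi> - indicator B \<xi> * Ff \<xi>) \<le> \<delta> * L2norm \<nu> Ff"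
  shows "(1 - \<epsilon> - \<delta>)\<^sup>2 \<le> measure \<mu> A * measure \<nu> B"
proof -
  have "(1 - \<epsilon> - \<delta>) * L2norm \<mu> f \<le> sqrt (measure \<mu> A * measure \<nu> B) * L2norm \<mu> f"
    using uncertainty_inequality[OF assms(1-4,6,8-11)] assms(12,13) fourier_ext_L2norm[OF assms(1-4,6)]
    by (simp add: algebra_simps)
  then have "1 - \<epsilon> - \<delta> \<le> sqrt (measure \<mu> A * measure \<nu> B)"
    using assms(5) by simp
  from power_mono[OF this, of 2] show ?thesis
    using assms(7) by simp
qed

theorem theoremA11:
  fixes \<mu> :: "'g::{t2_space,ab_group_add} measure"
    and \<nu> :: "('g \<Rightarrow> complex) measure"
    and f :: "'g \<Rightarrow> complex" and Ff :: "('g \<Rightarrow> complex) \<Rightarrow> complex"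
    and \<epsilon> \<delta> :: real and A :: "'g set" and B :: "('g \<Rightarrow> complex) set"
  assumes "lca_group TYPE('g)"
    and "sets \<mu> = sets borel"
    and "dual_borel_measure \<nu>"
    and "spectral_pair \<mu> \<nu>"
    and "L2 \<mu> f" and "L2norm \<mu> f > 0"
    and "fourier_ext \<mu> \<nu> f Ff"
    and "\<epsilon> \<ge> 0" and "\<delta> \<ge> 0" and "\<epsilon> + \<delta> \<le> 1"
    and "A \<in> sets \<mu>" and "B \<in> sets \<nu>"
    and "L2norm \<mu> (\<lambda>x. f x - indicator A x * f x) \<le> \<epsilon> * L2norm \<mu> f"
    and "L2norm \<nu> (\<lambda>\<xi>. Ff \<xi> - indicator B \<xi> * Ff \<xi>) \<le> \<delta> * L2norm \<nu> Ff"
  shows "ennreal ((1 - \<epsilon> - \<delta>)\<^sup>2) \<le> emeasure \<mu> A * emeasure \<nu> B"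
proof (cases "\<epsilon> + \<delta> = 1")
  case True
  then have "1 - \<epsilon> - \<delta> = 0"
    by simp
  then show ?thesis
    by simp
next
  case False
  then have "\<epsilon> < 1" "\<delta> < 1"
    using assms(8-10) by linarith+
  have space_\<nu>: "space \<nu> = chars"
    using assms(3) by (simp add: dual_borel_measure_def)
  have "emeasure \<mu> A \<noteq> 0"
    using L2norm_diff_indicator_null[OF assms(5), of A] assms(6,11,13) \<open>\<epsilon> < 1\<close>
    by (auto simp: null_sets_def mult_le_cancel_right1)
  moreover have "emeasure \<nu> B \<noteq> 0"
    using L2norm_diff_indicator_null[of \<nu> Ff B] assms(6,7,12,14) \<open>\<delta> < 1\<close>
      fourier_ext_L2norm[OF assms(2) space_\<nu> assms(4,5,7)]
    by (auto simp: null_sets_def mult_le_cancel_right1 fourier_ext_def)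
  moreover have "ennreal ((1 - \<epsilon> - \<delta>)\<^sup>2) \<le> emeasure \<mu> A * emeasure \<nu> B"
    if fin: "emeasure \<mu> A < \<infinity>" "emeasure \<nu> B < \<infinity>"
    using uncertainty_principle_finite[OF assms(2) space_\<nu> assms(4-7,10-12) fin assms(13,14)] fin
    by (simp add: emeasure_eq_ennreal_measure ennreal_leI flip: ennreal_mult)
  ultimately show ?thesis
    by (cases "emeasure \<mu> A = \<infinity> \<or> emeasure \<nu> B = \<infinity>") (auto simp: less_top)
qed

end
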